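(* Let $n\ge 1$ and for $k\ge0$ let ${\sf A}_k(\mathbf u)$ be the $n\times n$ matrix with $({\sf A}_k)_{i,j}=p_{k-j+i}(\mathbf u)$ for $i\le j$ and $0$ for $i>j$, $\mathbf u\in\mathbb C^n$. For a matrix-valued function ${\sf A}(\mathbf u)$ and $\mathbf v\in\mathbb C^n$ write $D{\sf A}[\mathbf v]:=\sum_{l=1}^n v_l\,\frac{\partial {\sf A}}{\partial u_l}$. Then for all $k,m\ge 0$, all $\mathbf u\in\mathbb C^n$ and all $\mathbf w\in\mathbb C^n$: \[ {\sf A}_k{\sf A}_m={\sf A}_m{\sf A}_k, \qquad D{\sf A}_k[{\sf A}_m\mathbf w]-D{\sf A}_m[{\sf A}_k\mathbf w]+{\sf A}_k\,D{\sf A}_m[\mathbf w]-{\sf A}_m\,D{\sf A}_k[\mathbf w]=0 . \] Consequently the flows $\partial_{t_k}\mathbf u={\sf A}_k(\mathbf u)\partial_{t_0}\mathbf u$ are pairwise compatible: for smooth $\mathbf u$ satisfying $\partial_{t_k}\mathbf u={\sf A}_k\partial_{t_0}\mathbf u$ and $\partial_{t_m}\mathbf u={\sf A}_m\partial_{t_0}\mathbf u$, the expressions for $\partial_{t_m}\partial_{t_k}\mathbf u$ and $\partial_{t_k}\partial_{t_m}\mathbf u$ obtained from these equations coincide.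
   Context: The elementary Schur polynomials $p_k(\mathbf u)$, $\mathbf u=(u_1,\dots,u_n)$, are defined by $\exp\big(\sum_{i=1}^n u_i z^i\big)=\sum_{k\ge 0}p_k(\mathbf u)z^k$, with the convention $p_k=0$ for $k<0$. *)

theory Defs
  imports "HOL-Analysis.Analysis" "HOL-Computational_Algebra.Formal_Power_Series"
begin

text \<open>Vectors in C^n are functions nat => complex, components indexed 1..n.
  Matrices are functions nat => nat => complex, entries indexed by 1..n.\<close>

definition useries :: "nat \<Rightarrow> (nat \<Rightarrow> complex) \<Rightarrow> complex fps" where
  "useries n u = Abs_fps (\<lambda>i. if 1 \<le> i \<and> i \<le> n then u i else 0)"

definition schurp :: "nat \<Rightarrow> int \<Rightarrow> (nat \<Rightarrow> complex) \<Rightarrow> complex" where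
  "schurp n k u = (if k < 0 then 0 else fps_nth (fps_exp 1 oo useries n u) (nat k))"

definition Amat :: "nat \<Rightarrow> nat \<Rightarrow> (nat \<Rightarrow> complex) \<Rightarrow> nat \<Rightarrow> nat \<Rightarrow> complex" where
  "Amat n k u i j = (if i \<le> j then schurp n (int k - int j + int i) u else 0)"

definition mmult :: "nat \<Rightarrow> (nat \<Rightarrow> nat \<Rightarrow> complex) \<Rightarrow> (nat \<Rightarrow> nat \<Rightarrow> complex) \<Rightarrow> nat \<Rightarrow> nat \<Rightarrow> complex" where
  "mmult n A B i j = (\<Sum>l=1..n. A i l * B l j)"

definition mvmult :: "nat \<Rightarrow> (nat \<Rightarrow> nat \<Rightarrow> complex) \<Rightarrow> (nat \<Rightarrow> complex) \<Rightarrow> nat \<Rightarrow> complex" where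
  "mvmult n A w i = (\<Sum>j=1..n. A i j * w j)"

definition Dmat :: "nat \<Rightarrow> ((nat \<Rightarrow> complex) \<Rightarrow> nat \<Rightarrow> nat \<Rightarrow> complex) \<Rightarrow> (nat \<Rightarrow> complex)
    \<Rightarrow> (nat \<Rightarrow> complex) \<Rightarrow> nat \<Rightarrow> nat \<Rightarrow> complex" where
  "Dmat n A u v i j = (\<Sum>l=1..n. v l * deriv (\<lambda>x. A (u(l := x)) i j) (u l))"

end

theory Submission
  imports Defs
begin

text \<open>Write \<open>P t = p\<^sub>t(u)\<close>. Then \<open>A\<^sub>k\<close> is the upper triangular Toeplitz matrix of the shifted
  sequence \<open>P (k + \<cdot>)\<close>, and since \<open>\<partial>p\<^sub>t/\<partial>u\<^sub>l = p\<^sub>t\<^sub>-\<^sub>l\<close> the same holds for \<open>DA\<^sub>k[v]\<close> after mixing the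
  shifts with weights \<open>v\<^sub>l\<close>. Every entry of \<open>A\<^sub>kA\<^sub>m\<close>, and every entry of
  \<open>DA\<^sub>k[A\<^sub>mw] + A\<^sub>kDA\<^sub>m[w]\<close> (as a combination of the \<open>w\<^sub>s\<close>), is a window
  \<open>\<Sum>\<^sub>y\<^sub>=\<^sub>a\<^sup>b P y P (N - y)\<close> of a convolution, and the reflection \<open>y \<mapsto> N - y\<close> maps the window
  belonging to \<open>(k, m)\<close> onto the one belonging to \<open>(m, k)\<close>. Compatibility of the flows is then
  linear algebra.\<close>

definition schur_seq :: "nat \<Rightarrow> (nat \<Rightarrow> complex) \<Rightarrow> nat \<Rightarrow> complex" where
  "schur_seq n u j = fps_nth (fps_exp 1 oo useries n u) j"

lemma schurp_eq_schur_seq: "schurp n t u = (if t < 0 then 0 else schur_seq n u (nat t))"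
  by (simp add: schurp_def schur_seq_def)

lemma schur_seq_0 [simp]: "schur_seq n u 0 = 1"
  by (simp add: schur_seq_def)

lemma useries_nth_upd:
  assumes "l \<in> {1..n}"
  shows "fps_nth (useries n (u(l := y))) t = (if t = l then y else fps_nth (useries n u) t)"
  using assms by (auto simp: useries_def)

lemma schur_seq_recurrence:
  "of_nat j * schur_seq n u j
     = (\<Sum>t=1..j. of_nat t * fps_nth (useries n u) t * schur_seq n u (j - t))"
proof (cases j)
  case 0
  then show ?thesis by simp
next
  case (Suc j')
  let ?E = "fps_exp 1 oo useries n u"
  have "fps_deriv ?E = ?E * fps_deriv (useries n u)"
    using fps_compose_deriv[of "useries n u" "fps_exp 1"] by (simp add: useries_def)
  then have "fps_nth (fps_deriv ?E) j' = fps_nth (?E * fps_deriv (useries n u)) j'"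
    by simp
  then have "of_nat j * schur_seq n u j
      = (\<Sum>i=0..j'. schur_seq n u i * (of_nat (j - i) * fps_nth (useries n u) (j - i)))"
    using Suc by (simp add: fps_mult_nth schur_seq_def Suc_diff_le add.commute)
  also have "\<dots> = (\<Sum>t=1..j. of_nat t * fps_nth (useries n u) t * schur_seq n u (j - t))"
    using Suc by (intro sum.reindex_bij_witness[of _ "\<lambda>t. j - t" "\<lambda>i. j - i"]) auto
  finally show ?thesis .
qed

lemma schur_seq_recurrence_shift:
  "(\<Sum>t=1..j. of_nat t * (fps_nth (useries n u) t * (if l \<le> j - t then schur_seq n u (j - t - l) else 0)))
     = (if l \<le> j then of_nat (j - l) * schur_seq n u (j - l) else 0)"
proof -
  have "(\<Sum>t=1..j. of_nat t * (fps_nth (useries n u) t * (if l \<le> j - t then schur_seq n u (j - t - l) else 0)))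
      = (\<Sum>t=1..j - l. of_nat t * fps_nth (useries n u) t * schur_seq n u (j - l - t))"
    by (rule sum.mono_neutral_cong_right) (auto simp: algebra_simps)
  then show ?thesis
    using schur_seq_recurrence[of "j - l" n u] by auto
qed

text \<open>The Schur polynomials satisfy \<open>\<partial>p\<^sub>j/\<partial>u\<^sub>l = p\<^sub>j\<^sub>-\<^sub>l\<close>: differentiate the recurrence
  \<open>j p\<^sub>j = \<Sum> t u\<^sub>t p\<^sub>j\<^sub>-\<^sub>t\<close> and use the recurrence again at \<open>j - l\<close>.\<close>

lemma has_field_derivative_schur_seq:
  assumes l: "l \<in> {1..n}"
  shows "((\<lambda>y. schur_seq n (u(l := y)) j) has_field_derivative
           (if l \<le> j then schur_seq n (u(l := x)) (j - l) else 0)) (at x)"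
proof (induction j arbitrary: x rule: less_induct)
  case (less j)
  show ?case
  proof (cases "j = 0")
    case True
    with l show ?thesis by simp
  next
    case False
    define v where "v = u(l := x)"
    let ?c = "fps_nth (useries n v)"
    let ?R = "\<lambda>y. \<Sum>t=1..j. of_nat t * fps_nth (useries n (u(l := y))) t * schur_seq n (u(l := y)) (j - t)"
    have rec: "schur_seq n (u(l := y)) j = ?R y / of_nat j" for y
      using schur_seq_recurrence[of j n "u(l := y)"] False by (simp add: field_simps)
    have "(?R has_field_derivative
        (\<Sum>t=1..j. of_nat t * ((if t = l then 1 else 0) * schur_seq n v (j - t)
           + ?c t * (if l \<le> j - t then schur_seq n v (j - t - l) else 0)))) (at x)"
    proof (rule DERIV_sum)
      fix t assume t: "t \<in> {1..j}"
      have coeff: "((\<lambda>y. fps_nth (useries n (u(l := y))) t) has_field_derivative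
          (if t = l then 1 else 0)) (at x)"
        using l by (cases "t = l") (auto simp: useries_nth_upd intro!: derivative_eq_intros)
      have seq: "((\<lambda>y. schur_seq n (u(l := y)) (j - t)) has_field_derivative
               (if l \<le> j - t then schur_seq n v (j - t - l) else 0)) (at x)"
        using less.IH[of "j - t" x] t False unfolding v_def by (simp del: fun_upd_apply)
      have "fps_nth (useries n (u(l := x))) t = ?c t" "schur_seq n (u(l := x)) (j - t) = schur_seq n v (j - t)"
        by (simp_all add: v_def)
      with DERIV_cmult[OF DERIV_mult[OF coeff seq], of "of_nat t"]
      show "((\<lambda>y. of_nat t * fps_nth (useries n (u(l := y))) t * schur_seq n (u(l := y)) (j - t))
          has_field_derivative of_nat t * ((if t = l then 1 else 0) * schur_seq n v (j - t)
           + ?c t * (if l \<le> j - t then schur_seq n v (j - t - l) else 0))) (at x)"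
        by (simp only: mult.assoc mult.commute[of "if l \<le> j - t then _ else _"])
    qed
    moreover have "(\<Sum>t=1..j. of_nat t * ((if t = l then 1 else 0) * schur_seq n v (j - t)))
        = (if l \<le> j then of_nat l * schur_seq n v (j - l) else 0)"
    proof -
      have "(\<Sum>t=1..j. of_nat t * ((if t = l then 1 else 0) * schur_seq n v (j - t)))
          = (\<Sum>t=1..j. if t = l then of_nat l * schur_seq n v (j - l) else 0)"
        by (rule sum.cong) auto
      then show ?thesis using l by simp
    qed
    moreover have "(\<Sum>t=1..j. of_nat t * (?c t * (if l \<le> j - t then schur_seq n v (j - t - l) else 0)))
        = (if l \<le> j then of_nat (j - l) * schur_seq n v (j - l) else 0)"
      by (rule schur_seq_recurrence_shift)
    ultimately have "(?R has_field_derivative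
        of_nat j * (if l \<le> j then schur_seq n v (j - l) else 0)) (at x)"
      by (simp only: distrib_left sum.distrib)
        (auto simp flip: distrib_right of_nat_add elim: DERIV_cong)
    from DERIV_cdivide[OF this, of "of_nat j"] show ?thesis
      using False unfolding rec v_def by (simp del: fun_upd_apply)
  qed
qed

lemma has_field_derivative_schurp:
  assumes "l \<in> {1..n}"
  shows "((\<lambda>y. schurp n t (u(l := y))) has_field_derivative schurp n (t - int l) (u(l := x))) (at x)"
  using has_field_derivative_schur_seq[OF assms, of u "nat t" x]
  by (cases "t < 0") (auto simp: schurp_eq_schur_seq nat_diff_distrib le_nat_iff)

definition upper_toeplitz :: "(int \<Rightarrow> complex) \<Rightarrow> nat \<Rightarrow> nat \<Rightarrow> nat \<Rightarrow> complex" where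
  "upper_toeplitz P k i j = (if i \<le> j then P (int k - int j + int i) else 0)"

definition upper_toeplitz_dir ::
    "(int \<Rightarrow> complex) \<Rightarrow> nat \<Rightarrow> nat \<Rightarrow> (nat \<Rightarrow> complex) \<Rightarrow> nat \<Rightarrow> nat \<Rightarrow> complex" where
  "upper_toeplitz_dir P n k v i j =
     (if i \<le> j then (\<Sum>l=1..n. v l * P (int k - int j + int i - int l)) else 0)"

lemma Amat_eq_upper_toeplitz: "Amat n k u = upper_toeplitz (\<lambda>t. schurp n t u) k"
  by (simp add: fun_eq_iff Amat_def upper_toeplitz_def)

lemma Dmat_Amat_eq_upper_toeplitz_dir:
  "Dmat n (Amat n k) u v = upper_toeplitz_dir (\<lambda>t. schurp n t u) n k v"
proof (intro ext)
  fix i j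
  have "deriv (\<lambda>x. Amat n k (u(l := x)) i j) (u l)
      = (if i \<le> j then schurp n (int k - int j + int i - int l) u else 0)" if "l \<in> {1..n}" for l
    using has_field_derivative_schurp[OF that, of "int k - int j + int i" u "u l"]
    by (auto simp: Amat_def intro!: DERIV_imp_deriv)
  then show "Dmat n (Amat n k) u v i j = upper_toeplitz_dir (\<lambda>t. schurp n t u) n k v i j"
    by (simp add: Dmat_def upper_toeplitz_dir_def)
qed

definition conv_sum :: "(int \<Rightarrow> complex) \<Rightarrow> int \<Rightarrow> int \<Rightarrow> int \<Rightarrow> complex" where
  "conv_sum P N a b = (\<Sum>y\<in>{a..b}. P y * P (N - y))"

lemma conv_sum_shift: "(\<Sum>x\<in>{a..b}. P (x + c) * P (N - c - x)) = conv_sum P N (a + c) (b + c)"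
  unfolding conv_sum_def
  by (rule sum.reindex_bij_witness[of _ "\<lambda>y. y - c" "\<lambda>x. x + c"]) (auto simp: algebra_simps)

lemma conv_sum_reflect:
  assumes "a + b = N + c"
  shows "conv_sum P N (a - c) a = conv_sum P N (b - c) b"
  unfolding conv_sum_def
  by (rule sum.reindex_bij_witness[of _ "\<lambda>y. N - y" "\<lambda>y. N - y"]) (use assms in \<open>auto simp: mult.commute\<close>)

lemma conv_sum_split:
  assumes "a \<le> b + 1" "b \<le> c"
  shows "conv_sum P N a b + conv_sum P N (b + 1) c = conv_sum P N a c"
proof -
  have "{a..c} = {a..b} \<union> {b + 1..c}" using assms by auto
  then show ?thesis by (simp add: conv_sum_def sum.union_disjoint)
qed

lemma sum_if_between_eq_sum_int:
  fixes f :: "int \<Rightarrow> 'a::comm_monoid_add"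
  assumes "1 \<le> i" "j \<le> n"
  shows "(\<Sum>l=1..n. if i \<le> l \<and> l \<le> j then f (int l) else 0) = (\<Sum>x\<in>{int i..int j}. f x)"
proof -
  have "(\<Sum>l=1..n. if i \<le> l \<and> l \<le> j then f (int l) else 0) = (\<Sum>l=i..j. f (int l))"
    by (rule sum.mono_neutral_cong_right) (use assms in auto)
  also have "\<dots> = (\<Sum>x\<in>{int i..int j}. f x)"
    by (rule sum.reindex_bij_witness[of _ nat int]) auto
  finally show ?thesis .
qed

lemma mmult_upper_toeplitz:
  assumes "i \<in> {1..n}" "j \<in> {1..n}"
  shows "mmult n (upper_toeplitz P a) (upper_toeplitz P b) i j
       = (if i \<le> j then conv_sum P (int a + int b - (int j - int i)) (int a - (int j - int i)) (int a)
          else 0)"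
proof (cases "i \<le> j")
  case True
  have "mmult n (upper_toeplitz P a) (upper_toeplitz P b) i j
      = (\<Sum>l=1..n. if i \<le> l \<and> l \<le> j then
           (\<lambda>x. P (int a - x + int i) * P (int b - int j + x)) (int l) else 0)"
    unfolding mmult_def upper_toeplitz_def by (rule sum.cong) auto
  also have "\<dots> = (\<Sum>x\<in>{int i..int j}. P (int a - x + int i) * P (int b - int j + x))"
    using assms by (intro sum_if_between_eq_sum_int) auto
  also have "\<dots> = conv_sum P (int a + int b - (int j - int i)) (int a - (int j - int i)) (int a)"
    unfolding conv_sum_def
    by (rule sum.reindex_bij_witness[of _ "\<lambda>y. int a + int i - y" "\<lambda>x. int a + int i - x"])
      (auto simp: algebra_simps)
  finally show ?thesis using True by simp
qed (auto simp: mmult_def upper_toeplitz_def intro!: sum.neutral)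

lemma mmult_upper_toeplitz_commute:
  assumes "i \<in> {1..n}" "j \<in> {1..n}"
  shows "mmult n (upper_toeplitz P a) (upper_toeplitz P b) i j
       = mmult n (upper_toeplitz P b) (upper_toeplitz P a) i j"
  using conv_sum_reflect[of "int a" "int b" "int a + int b - (int j - int i)" "int j - int i" P]
  unfolding mmult_upper_toeplitz[OF assms] by (simp add: add.commute)

lemma upper_toeplitz_dir_mvmult:
  assumes "i \<le> j"
  shows "upper_toeplitz_dir P n a (mvmult n (upper_toeplitz P b) w) i j
       = (\<Sum>s=1..n. w s * conv_sum P (int a + int b - int s - (int j - int i))
                                       (int b - int s + 1) (int b))"
proof -
  have "upper_toeplitz_dir P n a (mvmult n (upper_toeplitz P b) w) i j
      = (\<Sum>l=1..n. \<Sum>s=1..n. upper_toeplitz P b l s * w s * P (int a - int j + int i - int l))"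
    unfolding upper_toeplitz_dir_def mvmult_def using assms by (simp add: sum_distrib_right)
  also have "\<dots> = (\<Sum>s=1..n. \<Sum>l=1..n. upper_toeplitz P b l s * w s * P (int a - int j + int i - int l))"
    by (rule sum.swap)
  also have "\<dots> = (\<Sum>s=1..n. w s * conv_sum P (int a + int b - int s - (int j - int i))
                                               (int b - int s + 1) (int b))"
  proof (rule sum.cong[OF refl])
    fix s assume s: "s \<in> {1..n}"
    have "(\<Sum>l=1..n. upper_toeplitz P b l s * w s * P (int a - int j + int i - int l))
        = w s * (\<Sum>l=1..n. if 1 \<le> l \<and> l \<le> s then
             (\<lambda>x. P (x + (int b - int s)) * P (int a - (int j - int i) - x)) (int l) else 0)"
      unfolding sum_distrib_left by (rule sum.cong) (auto simp: upper_toeplitz_def algebra_simps)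
    also have "\<dots> = w s * (\<Sum>x\<in>{1..int s}. P (x + (int b - int s)) * P (int a - (int j - int i) - x))"
      using s sum_if_between_eq_sum_int[of 1 s n
          "\<lambda>x. P (x + (int b - int s)) * P (int a - (int j - int i) - x)"] by simp
    also have "\<dots> = w s * conv_sum P (int a + int b - int s - (int j - int i)) (int b - int s + 1) (int b)"
      using conv_sum_shift[of P "int b - int s" "int a + int b - int s - (int j - int i)" 1 "int s"]
      by (simp add: algebra_simps)
    finally show "(\<Sum>l=1..n. upper_toeplitz P b l s * w s * P (int a - int j + int i - int l)) = \<dots>" .
  qed
  finally show ?thesis .
qed

lemma mmult_upper_toeplitz_dir:
  assumes "i \<in> {1..n}" "j \<in> {1..n}" "i \<le> j"
  shows "mmult n (upper_toeplitz P a) (upper_toeplitz_dir P n b w) i j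
       = (\<Sum>s=1..n. w s * conv_sum P (int a + int b - int s - (int j - int i))
                                       (int b - int s - (int j - int i)) (int b - int s))"
proof -
  have "mmult n (upper_toeplitz P a) (upper_toeplitz_dir P n b w) i j
      = (\<Sum>l=1..n. \<Sum>s=1..n. if i \<le> l \<and> l \<le> j then
           w s * (P (int a - int l + int i) * P (int b - int j + int l - int s)) else 0)"
    unfolding mmult_def
    by (rule sum.cong) (auto simp: upper_toeplitz_def upper_toeplitz_dir_def sum_distrib_left algebra_simps)
  also have "\<dots> = (\<Sum>s=1..n. \<Sum>l=1..n. if i \<le> l \<and> l \<le> j then
           w s * (P (int a - int l + int i) * P (int b - int j + int l - int s)) else 0)"
    by (rule sum.swap)
  also have "\<dots> = (\<Sum>s=1..n. w s * conv_sum P (int a + int b - int s - (int j - int i))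
                                       (int b - int s - (int j - int i)) (int b - int s))"
  proof (rule sum.cong[OF refl])
    fix s :: nat
    let ?c = "int b - int j - int s"
    have "(\<Sum>l=1..n. if i \<le> l \<and> l \<le> j then
           w s * (P (int a - int l + int i) * P (int b - int j + int l - int s)) else 0)
        = w s * (\<Sum>l=1..n. if i \<le> l \<and> l \<le> j then
             (\<lambda>x. P (x + ?c) * P (int a + int i - x)) (int l) else 0)"
      unfolding sum_distrib_left by (rule sum.cong) (auto simp: algebra_simps)
    also have "\<dots> = w s * (\<Sum>x\<in>{int i..int j}. P (x + ?c) * P (int a + int i - x))"
      using assms sum_if_between_eq_sum_int[of i j n "\<lambda>x. P (x + ?c) * P (int a + int i - x)"]
      by simp
    also have "\<dots> = w s * conv_sum P (int a + int b - int s - (int j - int i))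
                                       (int b - int s - (int j - int i)) (int b - int s)"
      using conv_sum_shift[of P ?c "int a + int b - int s - (int j - int i)" "int i" "int j"]
      by (simp add: algebra_simps)
    finally show "(\<Sum>l=1..n. if i \<le> l \<and> l \<le> j then
           w s * (P (int a - int l + int i) * P (int b - int j + int l - int s)) else 0) = \<dots>" .
  qed
  finally show ?thesis .
qed

lemma upper_toeplitz_dir_mvmult_add_mmult:
  assumes "i \<in> {1..n}" "j \<in> {1..n}" "i \<le> j"
  shows "upper_toeplitz_dir P n a (mvmult n (upper_toeplitz P b) w) i j
         + mmult n (upper_toeplitz P a) (upper_toeplitz_dir P n b w) i j
       = (\<Sum>s=1..n. w s * conv_sum P (int a + int b - int s - (int j - int i))
                                       (int b - int s - (int j - int i)) (int b))"
  unfolding upper_toeplitz_dir_mvmult[OF assms(3)] mmult_upper_toeplitz_dir[OF assms]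
    sum.distrib[symmetric] distrib_left[symmetric]
  using assms(3) by (intro sum.cong refl arg_cong[where f = "(*) _"])
    (subst add.commute, rule conv_sum_split, auto)

lemma upper_toeplitz_compatibility:
  assumes "i \<in> {1..n}" "j \<in> {1..n}"
  shows "upper_toeplitz_dir P n k (mvmult n (upper_toeplitz P m) w) i j
       - upper_toeplitz_dir P n m (mvmult n (upper_toeplitz P k) w) i j
       + mmult n (upper_toeplitz P k) (upper_toeplitz_dir P n m w) i j
       - mmult n (upper_toeplitz P m) (upper_toeplitz_dir P n k w) i j = 0"
proof (cases "i \<le> j")
  case True
  have "conv_sum P (int k + int m - int s - (int j - int i)) (int m - int s - (int j - int i)) (int m)
      = conv_sum P (int m + int k - int s - (int j - int i)) (int k - int s - (int j - int i)) (int k)"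
    for s
    using conv_sum_reflect[of "int m" "int k" _ "int s + (int j - int i)" P]
    by (simp add: algebra_simps)
  then show ?thesis
    using upper_toeplitz_dir_mvmult_add_mmult[OF assms True, of P k m w]
      upper_toeplitz_dir_mvmult_add_mmult[OF assms True, of P m k w]
    by (simp add: algebra_simps)
next
  case False
  then have "mmult n (upper_toeplitz P a) (upper_toeplitz_dir P n b v) i j = 0" for a b v
    by (auto simp: mmult_def upper_toeplitz_def upper_toeplitz_dir_def intro!: sum.neutral)
  with False show ?thesis by (simp add: upper_toeplitz_dir_def)
qed

lemma mvmult_mmult: "mvmult n (mmult n A B) v i = mvmult n A (mvmult n B v) i"
  unfolding mvmult_def mmult_def
  by (simp add: sum_distrib_left sum_distrib_right mult.assoc) (rule sum.swap)

lemma mvmult_add_vec: "mvmult n A (\<lambda>r. v r + v' r) i = mvmult n A v i + mvmult n A v' i"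
  by (simp add: mvmult_def distrib_left sum.distrib)

lemma mvmult_add_mat: "mvmult n (\<lambda>i j. A i j + B i j) v i = mvmult n A v i + mvmult n B v i"
  by (simp add: mvmult_def distrib_right sum.distrib)

lemma mvmult_row_cong:
  "(\<And>j. j \<in> {1..n} \<Longrightarrow> A i j = B i j) \<Longrightarrow> mvmult n A v i = mvmult n B v i"
  unfolding mvmult_def by (rule sum.cong) auto

text \<open>With \<open>w = \<partial>\<^sub>t\<^sub>0u\<close> and \<open>z = \<partial>\<^sub>t\<^sub>0\<partial>\<^sub>t\<^sub>0u\<close>, the two sides are the chain-rule expansions of
  \<open>\<partial>\<^sub>t\<^sub>m(A\<^sub>k \<partial>\<^sub>t\<^sub>0u)\<close> and \<open>\<partial>\<^sub>t\<^sub>k(A\<^sub>m \<partial>\<^sub>t\<^sub>0u)\<close> along the flows; here \<open>X = DA\<^sub>k[A\<^sub>m w]\<close>,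
  \<open>Y = DA\<^sub>m[A\<^sub>k w]\<close>, \<open>DA = DA\<^sub>k[w]\<close>, \<open>DB = DA\<^sub>m[w]\<close>.\<close>

lemma compatible_flows:
  assumes comm: "\<forall>i\<in>{1..n}. \<forall>j\<in>{1..n}. mmult n A B i j = mmult n B A i j"
    and curv: "\<forall>i\<in>{1..n}. \<forall>j\<in>{1..n}. X i j - Y i j + mmult n A DB i j - mmult n B DA i j = 0"
    and i: "i \<in> {1..n}"
  shows "mvmult n X w i + mvmult n A (\<lambda>r. mvmult n DB w r + mvmult n B z r) i
       = mvmult n Y w i + mvmult n B (\<lambda>r. mvmult n DA w r + mvmult n A z r) i"
proof -
  have "mvmult n X w i + mvmult n A (\<lambda>r. mvmult n DB w r + mvmult n B z r) i
      = mvmult n (\<lambda>i j. X i j + mmult n A DB i j) w i + mvmult n (mmult n A B) z i"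
    by (simp add: mvmult_add_vec mvmult_add_mat mvmult_mmult)
  also have "\<dots> = mvmult n (\<lambda>i j. Y i j + mmult n B DA i j) w i + mvmult n (mmult n B A) z i"
  proof -
    have "mvmult n (\<lambda>i j. X i j + mmult n A DB i j) w i = mvmult n (\<lambda>i j. Y i j + mmult n B DA i j) w i"
      using curv i by (intro mvmult_row_cong) (auto simp: algebra_simps)
    moreover have "mvmult n (mmult n A B) z i = mvmult n (mmult n B A) z i"
      using comm i by (intro mvmult_row_cong) auto
    ultimately show ?thesis by simp
  qed
  also have "\<dots> = mvmult n Y w i + mvmult n B (\<lambda>r. mvmult n DA w r + mvmult n A z r) i"
    by (simp add: mvmult_add_vec mvmult_add_mat mvmult_mmult)
  finally show ?thesis .
qed

theorem mainTheorem4: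
  fixes n k m :: nat and u w z :: "nat \<Rightarrow> complex"
  assumes "n \<ge> 1"
  shows "(\<forall>i\<in>{1..n}. \<forall>j\<in>{1..n}.
            mmult n (Amat n k u) (Amat n m u) i j = mmult n (Amat n m u) (Amat n k u) i j)
       \<and> (\<forall>i\<in>{1..n}. \<forall>j\<in>{1..n}.
            Dmat n (Amat n k) u (mvmult n (Amat n m u) w) i j
          - Dmat n (Amat n m) u (mvmult n (Amat n k u) w) i j
          + mmult n (Amat n k u) (Dmat n (Amat n m) u w) i j
          - mmult n (Amat n m u) (Dmat n (Amat n k) u w) i j = 0)
       \<and> (\<forall>i\<in>{1..n}.
            mvmult n (Dmat n (Amat n k) u (mvmult n (Amat n m u) w)) w i
          + mvmult n (Amat n k u)
              (\<lambda>r. mvmult n (Dmat n (Amat n m) u w) w r + mvmult n (Amat n m u) z r) i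
          = mvmult n (Dmat n (Amat n m) u (mvmult n (Amat n k u) w)) w i
          + mvmult n (Amat n m u)
              (\<lambda>r. mvmult n (Dmat n (Amat n k) u w) w r + mvmult n (Amat n k u) z r) i)"
proof -
  have comm: "\<forall>i\<in>{1..n}. \<forall>j\<in>{1..n}.
      mmult n (Amat n k u) (Amat n m u) i j = mmult n (Amat n m u) (Amat n k u) i j"
    unfolding Amat_eq_upper_toeplitz using mmult_upper_toeplitz_commute by blast
  have curv: "\<forall>i\<in>{1..n}. \<forall>j\<in>{1..n}.
      Dmat n (Amat n k) u (mvmult n (Amat n m u) w) i j
      - Dmat n (Amat n m) u (mvmult n (Amat n k u) w) i j
      + mmult n (Amat n k u) (Dmat n (Amat n m) u w) i j
      - mmult n (Amat n m u) (Dmat n (Amat n k) u w) i j = 0"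
    unfolding Dmat_Amat_eq_upper_toeplitz_dir Amat_eq_upper_toeplitz
    using upper_toeplitz_compatibility by blast
  show ?thesis
    using comm curv compatible_flows[OF comm curv] by blast
qed

end
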